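(* Let $A$ be an $n\times n$ Bott matrix. Then the seal space $Q^n_{\mathcal{F}_A}$ is homeomorphic to $M(A)=\mathbb{R}^n/\Gamma(A)$.
   Context: $\mathcal{C}^n=\{x\in\mathbb{R}^n: -\tfrac14\le x_i\le\tfrac14\}$; for $j\in\{\pm1,\dots,\pm n\}$, $\mathbf{F}(i)$, $\mathbf{F}(-i)$ ($1\le i\le n$) are the facets in $\{x_i=\tfrac14\}$, $\{x_i=-\tfrac14\}$. A binary matrix has entries in $\mathbb{Z}_2$; $A^i_k$ denotes the $(i,k)$ entry viewed as $0$ or $1$. A Bott matrix is a binary square matrix conjugate by a permutation matrix to a strictly upper triangular binary matrix (in particular it has zero diagonal). For a binary $n\times n$ matrix $A$ with zero diagonal: $\mathcal{F}_A$ is the facets-pairing structure pairing $\mathbf{F}(j)$ with $\mathbf{F}(-j)$ via $\tau^A_j:\mathbf{F}(j)\to\mathbf{F}(-j)$, $\tau^A_j(x)=y$ with $y_{|j|}=-x_{|j|}$ and $y_k=(-1)^{A^{|j|}_k}x_k$ for $k\ne|j|$. The seal space $Q^n_{\mathcal{F}_A}$ is the quotient of $\mathcal{C}^n$ by the equivalence relation generated by $x\sim\tau^A_j(x)$ ($x\in\mathbf{F}(j)$). $\Gamma(A)$ is the subgroup of $\mathrm{Isom}(\mathbb{R}^n)$ generated by $s_1,\dots,s_n$, where $s_i(x)=y$ with $y_i=x_i+\tfrac12$ and $y_k=(-1)^{A^i_k}x_k$ for $k\ne i$. *)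

theory Defs
  imports "HOL-Analysis.Analysis"
begin

definition quotient_topology :: "'a topology \<Rightarrow> ('a \<times> 'a) set \<Rightarrow> 'a set topology" where
  "quotient_topology X r =
     topology (\<lambda>U. U \<subseteq> topspace X // r \<and> openin X {x \<in> topspace X. r``{x} \<in> U})"

text \<open>Binary matrices: entries in Z_2 are encoded as bool (True = 1).
Indices range over a finite type 'n, so the matrix is n x n with n = CARD('n).\<close>

text \<open>Bott matrix: conjugate by a permutation matrix to a strictly upper triangular
binary matrix, i.e. there is an enumeration of the indices by 0..n-1 such that every
nonzero entry (i,k) satisfies sigma i < sigma k.\<close>
definition bott_matrix :: "('n::finite \<Rightarrow> 'n \<Rightarrow> bool) \<Rightarrow> bool" where
  "bott_matrix A \<longleftrightarrow> (\<exists>\<sigma> :: 'n \<Rightarrow> nat. bij_betw \<sigma> UNIV {..<CARD('n)} \<and>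
      (\<forall>i k. A i k \<longrightarrow> \<sigma> i < \<sigma> k))"

definition sgn01 :: "bool \<Rightarrow> real" where
  "sgn01 b = (if b then -1 else 1)"

definition cube :: "(real^'n) set" where
  "cube = {x. \<forall>i. -1/4 \<le> x$i \<and> x$i \<le> 1/4}"

text \<open>Facet F(i) (sign True) lies in x_i = 1/4, F(-i) (sign False) in x_i = -1/4.\<close>
definition facet :: "'n \<Rightarrow> bool \<Rightarrow> (real^'n) set" where
  "facet i pos = {x \<in> cube. x$i = (if pos then 1/4 else -1/4)}"

text \<open>tau^A_j, which depends only on |j| = i.\<close>
definition tau :: "('n \<Rightarrow> 'n \<Rightarrow> bool) \<Rightarrow> 'n \<Rightarrow> real^'n \<Rightarrow> real^'n" where
  "tau A i x = (\<chi> k. if k = i then - x$i else sgn01 (A i k) * x$k)"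

definition seal_rel :: "('n \<Rightarrow> 'n \<Rightarrow> bool) \<Rightarrow> ((real^'n) \<times> (real^'n)) set" where
  "seal_rel A = (let R = {(x, tau A i x) | x i pos. x \<in> facet i pos}
                 in (R \<union> R\<inverse>)\<^sup>*)"

definition seal_space :: "('n \<Rightarrow> 'n \<Rightarrow> bool) \<Rightarrow> (real^'n) set topology" where
  "seal_space A = quotient_topology (subtopology euclidean cube) (seal_rel A)"

definition gen_s :: "('n \<Rightarrow> 'n \<Rightarrow> bool) \<Rightarrow> 'n \<Rightarrow> real^'n \<Rightarrow> real^'n" where
  "gen_s A i x = (\<chi> k. if k = i then x$i + 1/2 else sgn01 (A i k) * x$k)"

inductive_set Gamma :: "('n \<Rightarrow> 'n \<Rightarrow> bool) \<Rightarrow> (real^'n \<Rightarrow> real^'n) set" for A where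
  Gamma_id: "id \<in> Gamma A"
| Gamma_gen: "g \<in> Gamma A \<Longrightarrow> gen_s A i \<circ> g \<in> Gamma A"
| Gamma_inv: "g \<in> Gamma A \<Longrightarrow> inv (gen_s A i) \<circ> g \<in> Gamma A"

definition orbit_rel :: "('n \<Rightarrow> 'n \<Rightarrow> bool) \<Rightarrow> ((real^'n) \<times> (real^'n)) set" where
  "orbit_rel A = {(x, g x) | x g. g \<in> Gamma A}"

definition M_space :: "('n \<Rightarrow> 'n \<Rightarrow> bool) \<Rightarrow> (real^'n) set topology" where
  "M_space A = quotient_topology euclidean (orbit_rel A)"

end

theory Submission
  imports Defs
begin

text \<open>
  For a Bott matrix A the cube [-1/4,1/4]^n is a fundamental domain of the
  group Gamma(A), and the gluing of its facets prescribed by A identifies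
  exactly those points of the cube that lie in one Gamma(A)-orbit.
\<close>

lemma quotient_topology_istopology:
  "istopology (\<lambda>U. U \<subseteq> topspace X // r \<and> openin X {x \<in> topspace X. r``{x} \<in> U})"
proof -
  have "{x \<in> topspace X. r``{x} \<in> S \<inter> T}
      = {x \<in> topspace X. r``{x} \<in> S} \<inter> {x \<in> topspace X. r``{x} \<in> T}" for S T
    by blast
  moreover have "{x \<in> topspace X. r``{x} \<in> \<Union>K} = (\<Union>U\<in>K. {x \<in> topspace X. r``{x} \<in> U})" for K
    by blast
  ultimately show ?thesis
    unfolding istopology_def by (auto intro: openin_Int openin_Union)
qed

lemma openin_quotient_topology:
  "openin (quotient_topology X r) U \<longleftrightarrow>
     U \<subseteq> topspace X // r \<and> openin X {x \<in> topspace X. r``{x} \<in> U}"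
  unfolding quotient_topology_def topology_inverse'[OF quotient_topology_istopology] ..

lemma topspace_quotient_topology: "topspace (quotient_topology X r) = topspace X // r"
proof
  show "topspace (quotient_topology X r) \<subseteq> topspace X // r"
    unfolding topspace_def openin_quotient_topology by blast
  have "{x \<in> topspace X. r``{x} \<in> topspace X // r} = topspace X"
    by (auto intro: quotientI)
  then have "openin (quotient_topology X r) (topspace X // r)"
    unfolding openin_quotient_topology by simp
  then show "topspace X // r \<subseteq> topspace (quotient_topology X r)"
    by (rule openin_subset)
qed

lemma homeomorphic_quotient_fundamental_domain:
  assumes E: "equiv (topspace X) E"
    and C: "C \<subseteq> topspace X"
    and meets: "\<And>x. x \<in> topspace X \<Longrightarrow> \<exists>c\<in>C. (x, c) \<in> E"
    and restrict: "\<And>x. x \<in> C \<Longrightarrow> r``{x} = E``{x} \<inter> C"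
    and saturated_open: "\<And>W. W \<subseteq> topspace X \<Longrightarrow> (\<And>x y. (x, y) \<in> E \<Longrightarrow> x \<in> W \<Longrightarrow> y \<in> W)
               \<Longrightarrow> openin (subtopology X C) (W \<inter> C) \<Longrightarrow> openin X W"
  shows "quotient_topology (subtopology X C) r homeomorphic_space quotient_topology X E"
proof -
  define f where "f D = E``D" for D
  define g where "g D = D \<inter> C" for D
  have top_C: "topspace (quotient_topology (subtopology X C) r) = C // r"
    using C by (simp add: topspace_quotient_topology Int_absorb1)
  have top_X: "topspace (quotient_topology X E) = topspace X // E"
    by (simp add: topspace_quotient_topology)
  have E_class: "E``(E``{x} \<inter> C) = E``{x}" if "x \<in> C" for x
    using E that C unfolding equiv_def refl_on_def sym_def trans_def by blast
  have rep: "\<exists>c\<in>C. D = E``{c}" if D: "D \<in> topspace X // E" for D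
  proof -
    obtain x where x: "x \<in> topspace X" "D = E``{x}" using D by (blast elim: quotientE)
    with meets obtain c where "c \<in> C" "(x, c) \<in> E" by blast
    with x E show ?thesis by (metis equiv_class_eq)
  qed
  have f_class: "f (r``{x}) = E``{x}" and g_class: "g (E``{x}) = r``{x}" if "x \<in> C" for x
    using restrict[OF that] E_class[OF that] by (simp_all add: f_def g_def)
  have cont_f: "continuous_map (quotient_topology (subtopology X C) r) (quotient_topology X E) f"
    unfolding continuous_map_def
  proof (intro conjI allI impI)
    show "f \<in> topspace (quotient_topology (subtopology X C) r) \<rightarrow> topspace (quotient_topology X E)"
      unfolding top_C top_X using C by (auto elim!: quotientE simp: f_class intro!: quotientI)
  next
    fix U assume "openin (quotient_topology X E) U"
    then have "openin X {x \<in> topspace X. E``{x} \<in> U}"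
      by (simp add: openin_quotient_topology)
    then have "openin (subtopology X C) ({x \<in> topspace X. E``{x} \<in> U} \<inter> C)"
      by (simp add: openin_subtopology_Int)
    moreover have "{x \<in> topspace X. E``{x} \<in> U} \<inter> C
        = {x \<in> topspace (subtopology X C). r``{x} \<in> {D \<in> C // r. f D \<in> U}}"
      using C by (auto simp: f_class intro: quotientI)
    ultimately show "openin (quotient_topology (subtopology X C) r)
        {D \<in> topspace (quotient_topology (subtopology X C) r). f D \<in> U}"
      unfolding top_C openin_quotient_topology by (simp add: Int_absorb1 C)
  qed
  have cont_g: "continuous_map (quotient_topology X E) (quotient_topology (subtopology X C) r) g"
    unfolding continuous_map_def
  proof (intro conjI allI impI)
    show "g \<in> topspace (quotient_topology X E) \<rightarrow> topspace (quotient_topology (subtopology X C) r)"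
    proof
      fix D assume "D \<in> topspace (quotient_topology X E)"
      then obtain c where "c \<in> C" "D = E``{c}" using rep unfolding top_X by blast
      then show "g D \<in> topspace (quotient_topology (subtopology X C) r)"
        unfolding top_C by (simp add: g_class quotientI)
    qed
  next
    fix V assume "openin (quotient_topology (subtopology X C) r) V"
    then have V: "openin (subtopology X C) {x \<in> C. r``{x} \<in> V}"
      by (simp add: openin_quotient_topology Int_absorb1 C)
    define W where "W = {x \<in> topspace X. g (E``{x}) \<in> V}"
    have "W \<inter> C = {x \<in> C. r``{x} \<in> V}"
      using C by (auto simp: W_def g_class)
    moreover have "y \<in> W" if "(x, y) \<in> E" "x \<in> W" for x y
      using that E equiv_class_eq[OF E that(1)] unfolding W_def equiv_def refl_on_def by auto
    ultimately have "openin X W"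
      using saturated_open[of W] V by (auto simp: W_def)
    moreover have "{x \<in> topspace X. E``{x} \<in> {D \<in> topspace X // E. g D \<in> V}} = W"
      by (auto simp: W_def intro: quotientI)
    ultimately show "openin (quotient_topology X E)
        {D \<in> topspace (quotient_topology X E). g D \<in> V}"
      unfolding top_X openin_quotient_topology by auto
  qed
  have "g (f D) = D" if "D \<in> C // r" for D
    using that by (auto elim!: quotientE simp: f_class g_class)
  moreover have "f (g D) = D" if "D \<in> topspace X // E" for D
    using rep[OF that] by (auto simp: f_class g_class)
  ultimately show ?thesis
    unfolding homeomorphic_space_def homeomorphic_maps_def top_C top_X
    using cont_f cont_g by blast
qed

lemma sgn01_sq [simp]: "sgn01 b * sgn01 b = 1"
  by (simp add: sgn01_def)

lemma abs_sgn01 [simp]: "\<bar>sgn01 b\<bar> = 1"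
  by (simp add: sgn01_def)

definition shift :: "('n \<Rightarrow> 'n \<Rightarrow> bool) \<Rightarrow> 'n \<Rightarrow> int \<Rightarrow> real^'n \<Rightarrow> real^'n" where
  "shift A i d x = (\<chi> k. if k = i then x$i + of_int d / 2 else sgn01 (A i k) * x$k)"

lemma gen_s_shift: "gen_s A i = shift A i 1"
  by (simp add: fun_eq_iff gen_s_def shift_def)

lemma shift_cancel: "shift A i d \<circ> shift A i (- d) = id"
  by (auto simp: fun_eq_iff vec_eq_iff shift_def mult.assoc[symmetric])

lemma inv_shift_one: "inv (shift A i 1) = shift A i (-1)"
  using shift_cancel[of A i 1] shift_cancel[of A i "-1"]
  by (intro inv_unique_comp) simp_all

lemma shift_in_Gamma: "shift A i 1 \<in> Gamma A" "shift A i (-1) \<in> Gamma A"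
  using Gamma_gen[OF Gamma_id, of A i] Gamma_inv[OF Gamma_id, of A i]
  by (simp_all add: gen_s_shift inv_shift_one)

lemma Gamma_induct [consumes 1, case_names id shift]:
  assumes "g \<in> Gamma A" "P id"
    and "\<And>g i d. g \<in> Gamma A \<Longrightarrow> P g \<Longrightarrow> d = 1 \<or> d = -1 \<Longrightarrow> P (shift A i d \<circ> g)"
  shows "P g"
  using assms(1)
proof induction
  case Gamma_id
  show ?case by (fact assms(2))
next
  case (Gamma_gen g i)
  then show ?case using assms(3)[of g 1 i] by (simp add: gen_s_shift comp_def)
next
  case (Gamma_inv g i)
  then show ?case using assms(3)[of g "-1" i] by (simp add: gen_s_shift inv_shift_one comp_def)
qed

lemma Gamma_comp: "g \<in> Gamma A \<Longrightarrow> h \<in> Gamma A \<Longrightarrow> g \<circ> h \<in> Gamma A"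
  by (induction g rule: Gamma.induct) (auto simp: o_assoc[symmetric] intro: Gamma.intros)

lemma Gamma_left_inverse: "g \<in> Gamma A \<Longrightarrow> \<exists>h\<in>Gamma A. h \<circ> g = id"
proof (induction g rule: Gamma_induct)
  case id
  show ?case using Gamma_id by (metis comp_id)
next
  case (shift g i d)
  then obtain h where h: "h \<in> Gamma A" "h \<circ> g = id" by blast
  have "(h \<circ> shift A i (- d)) \<circ> (shift A i d \<circ> g) = id"
    using shift_cancel[of A i "- d"] h(2) by (simp add: o_assoc) (metis comp_assoc comp_id)
  moreover have "shift A i (- d) \<in> Gamma A"
    using \<open>d = 1 \<or> d = -1\<close> shift_in_Gamma by auto
  then have "h \<circ> shift A i (- d) \<in> Gamma A"
    by (rule Gamma_comp[OF h(1)])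
  ultimately show ?case by blast
qed

lemma orbit_rel_equiv: "equiv UNIV (orbit_rel A)"
proof (rule equivI)
  show "orbit_rel A \<subseteq> UNIV \<times> UNIV" by simp
  show "refl (orbit_rel A)"
    by (auto simp: orbit_rel_def refl_on_def) (metis Gamma_id id_apply)
  show "sym (orbit_rel A)"
  proof (rule symI)
    fix x y assume "(x, y) \<in> orbit_rel A"
    then obtain g where g: "g \<in> Gamma A" "y = g x" by (auto simp: orbit_rel_def)
    then obtain h where "h \<in> Gamma A" "h \<circ> g = id" using Gamma_left_inverse by blast
    with g show "(y, x) \<in> orbit_rel A"
      unfolding orbit_rel_def by (metis (mono_tags, lifting) comp_apply id_apply mem_Collect_eq)
  qed
  show "trans (orbit_rel A)"
  proof (rule transI)
    fix x y z assume "(x, y) \<in> orbit_rel A" "(y, z) \<in> orbit_rel A"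
    then obtain g h where gh: "g \<in> Gamma A" "y = g x" "h \<in> Gamma A" "z = h y"
      by (auto simp: orbit_rel_def)
    then have "(x, (h \<circ> g) x) \<in> orbit_rel A"
      unfolding orbit_rel_def using Gamma_comp[of h A g] by blast
    with gh show "(x, z) \<in> orbit_rel A" by simp
  qed
qed

definition flip_sign :: "('n::finite \<Rightarrow> 'n \<Rightarrow> bool) \<Rightarrow> ('n \<Rightarrow> int) \<Rightarrow> 'n \<Rightarrow> real" where
  "flip_sign A n k = (\<Prod>i\<in>{i. odd (n i)}. sgn01 (A i k))"

definition aff :: "('n::finite \<Rightarrow> 'n \<Rightarrow> bool) \<Rightarrow> ('n \<Rightarrow> int) \<Rightarrow> real^'n \<Rightarrow> real^'n" where
  "aff A n x = (\<chi> k. flip_sign A n k * x$k + of_int (n k) / 2)"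

lemma abs_flip_sign: "\<bar>flip_sign A n k\<bar> = 1"
  by (simp add: flip_sign_def abs_prod)

lemma flip_sign_toggle:
  assumes "\<And>k. odd (n' k) \<longleftrightarrow> (if k = j then even (n j) else odd (n k))"
  shows "flip_sign A n' k = sgn01 (A j k) * flip_sign A n k"
proof (cases "odd (n j)")
  case True
  then have "{i. odd (n i)} = insert j {i. odd (n' i)}" "j \<notin> {i. odd (n' i)}"
    using assms by auto
  then show ?thesis
    unfolding flip_sign_def by (simp add: mult.assoc[symmetric])
next
  case False
  then have "{i. odd (n' i)} = insert j {i. odd (n i)}" "j \<notin> {i. odd (n i)}"
    using assms by auto
  then show ?thesis
    unfolding flip_sign_def by simp
qed

text \<open>
  Composing with a generator keeps the normal form (zero diagonal is needed
  so that the sign of coordinate i itself does not change).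
\<close>

lemma shift_aff:
  assumes "\<not> A j j" "odd d"
  shows "shift A j d \<circ> aff A n = aff A (\<lambda>k. if k = j then n j + d else if A j k then - n k else n k)"
    (is "_ = aff A ?n'")
proof -
  have sign: "flip_sign A ?n' k = sgn01 (A j k) * flip_sign A n k" for k
    by (rule flip_sign_toggle) (use assms(2) in auto)
  have "(shift A j d \<circ> aff A n) x $ k = aff A ?n' x $ k" for x k
  proof (cases "k = j")
    case True
    then show ?thesis using sign[of j] assms(1)
      by (simp add: shift_def aff_def sgn01_def add_divide_distrib)
  next
    case False
    then show ?thesis
      by (simp add: shift_def aff_def sign sgn01_def algebra_simps)
  qed
  then show ?thesis by (simp add: fun_eq_iff vec_eq_iff)
qed

lemma Gamma_aff:
  assumes "\<And>i. \<not> A i i" "g \<in> Gamma A"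
  shows "\<exists>n. g = aff A n"
  using assms(2)
proof (induction g rule: Gamma_induct)
  case id
  have "aff A (\<lambda>k. 0) = id"
    by (simp add: fun_eq_iff vec_eq_iff aff_def flip_sign_def)
  then show ?case by metis
next
  case (shift g i d)
  then obtain n where "g = aff A n" by blast
  moreover have "odd d" using \<open>d = 1 \<or> d = -1\<close> by auto
  ultimately show ?case using shift_aff[of A i d n] assms(1) by metis
qed

lemma aff_coord_diff: "\<bar>aff A n y $ k - aff A n z $ k\<bar> = \<bar>y$k - z$k\<bar>"
proof -
  have "aff A n y $ k - aff A n z $ k = flip_sign A n k * (y$k - z$k)"
    by (simp add: aff_def algebra_simps)
  then show ?thesis by (simp add: abs_mult abs_flip_sign)
qed

lemma continuous_aff: "continuous_on UNIV (aff A n)"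
  unfolding aff_def by (intro continuous_intros)

lemma bott_matrix_diag: "bott_matrix A \<Longrightarrow> \<not> A i i"
  unfolding bott_matrix_def by blast

lemma shift_translates:
  assumes "\<And>k. A i k \<Longrightarrow> x$k = 0"
  shows "shift A i d x = (\<chi> k. if k = i then x$i + of_int d / 2 else x$k)"
  using assms by (auto simp: shift_def vec_eq_iff sgn01_def)

lemma Gamma_translation:
  assumes "\<not> A i i"
  shows "\<exists>g\<in>Gamma A. \<forall>x. (\<forall>k. A i k \<longrightarrow> x$k = 0) \<longrightarrow>
            g x = (\<chi> k. if k = i then x$i + of_int m / 2 else x$k)"
proof -
  have step: "\<exists>g\<in>Gamma A. \<forall>x. (\<forall>k. A i k \<longrightarrow> x$k = 0) \<longrightarrow>
                g x = (\<chi> k. if k = i then x$i + of_int (m + d) / 2 else x$k)"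
    if d: "d = 1 \<or> d = -1" and g: "g \<in> Gamma A"
      "\<forall>x. (\<forall>k. A i k \<longrightarrow> x$k = 0) \<longrightarrow> g x = (\<chi> k. if k = i then x$i + of_int m / 2 else x$k)"
    for m d g
  proof -
    have "(shift A i d \<circ> g) x = (\<chi> k. if k = i then x$i + of_int (m + d) / 2 else x$k)"
      if x: "\<forall>k. A i k \<longrightarrow> x$k = 0" for x
    proof -
      have "A i k \<Longrightarrow> g x $ k = 0" for k
        using g(2) x assms by auto
      then show ?thesis
        using g(2) x by (simp add: shift_translates vec_eq_iff add_divide_distrib)
    qed
    moreover have "shift A i d \<circ> g \<in> Gamma A"
      using d shift_in_Gamma[of A i] Gamma_comp[OF _ g(1)] by auto
    ultimately show ?thesis by blast
  qed
  show ?thesis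
  proof (induction m rule: int_induct[where k = 0])
    case base
    show ?case by (intro bexI[of _ id] Gamma_id) (simp add: vec_eq_iff)
  next
    case (step1 m)
    then obtain g where "g \<in> Gamma A"
      "\<forall>x. (\<forall>k. A i k \<longrightarrow> x$k = 0) \<longrightarrow> g x = (\<chi> k. if k = i then x$i + of_int m / 2 else x$k)"
      by blast
    from step[of 1, OF _ this] show ?case by simp
  next
    case (step2 m)
    then obtain g where "g \<in> Gamma A"
      "\<forall>x. (\<forall>k. A i k \<longrightarrow> x$k = 0) \<longrightarrow> g x = (\<chi> k. if k = i then x$i + of_int m / 2 else x$k)"
      by blast
    from step[of "-1", OF _ this] show ?case by (simp only: diff_conv_add_uminus) simp
  qed
qed

text \<open>
  For a Bott matrix, every half-lattice point (m_k/2)_k lies in the orbit of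
  0: build it coordinate by coordinate along the triangular order of A, each
  new translation not disturbing the coordinates already placed.
\<close>

lemma Bott_reaches_half_lattice:
  fixes A :: "'n::finite \<Rightarrow> 'n \<Rightarrow> bool"
  assumes "bott_matrix A"
  shows "\<exists>h\<in>Gamma A. h 0 = (\<chi> k. of_int (m k) / 2)"
proof -
  obtain \<sigma> :: "'n \<Rightarrow> nat" where \<sigma>: "bij_betw \<sigma> UNIV {..<CARD('n)}"
    and upper: "\<And>i k. A i k \<Longrightarrow> \<sigma> i < \<sigma> k"
    using assms unfolding bott_matrix_def by blast
  define v :: "nat \<Rightarrow> real^'n" where "v j = (\<chi> k. if \<sigma> k < j then of_int (m k) / 2 else 0)" for j
  have "\<exists>h\<in>Gamma A. h 0 = v j" if "j \<le> CARD('n)" for j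
    using that
  proof (induction j)
    case 0
    show ?case by (intro bexI[of _ id] Gamma_id) (simp add: v_def vec_eq_iff)
  next
    case (Suc j)
    then obtain h where h: "h \<in> Gamma A" "h 0 = v j" by auto
    obtain i where i: "\<sigma> i = j"
      using Suc.prems \<sigma> by (metis Suc_le_eq bij_betw_iff_bijections lessThan_iff)
    have zero: "\<forall>k. A i k \<longrightarrow> v j $ k = 0"
      using upper i by (auto simp: v_def dest: less_asym)
    obtain g where "g \<in> Gamma A" "g (v j) = (\<chi> k. if k = i then v j $ i + of_int (m i) / 2 else v j $ k)"
      using Gamma_translation[where A = A and i = i and m = "m i"] bott_matrix_diag[OF assms] zero by blast
    moreover have "(\<chi> k. if k = i then v j $ i + of_int (m i) / 2 else v j $ k) = v (Suc j)"
      using i bij_betw_imp_inj_on[OF \<sigma>] by (auto simp: v_def vec_eq_iff less_Suc_eq dest: injD)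
    ultimately have "(g \<circ> h) 0 = v (Suc j)" "g \<circ> h \<in> Gamma A"
      using h Gamma_comp by auto
    then show ?case by blast
  qed
  moreover have "v (CARD('n)) = (\<chi> k. of_int (m k) / 2)"
    using \<sigma> by (auto simp: v_def vec_eq_iff bij_betw_def)
  ultimately show ?thesis by (metis order_refl)
qed

definition tile :: "('n \<Rightarrow> int) \<Rightarrow> (real^'n) set" where
  "tile m = {y. \<forall>k. \<bar>y$k - of_int (m k) / 2\<bar> \<le> 1/4}"

lemma cube_abs: "x \<in> cube \<longleftrightarrow> (\<forall>k. \<bar>x$k\<bar> \<le> 1/4)"
proof -
  have "(-1/4 \<le> t \<and> t \<le> 1/4) \<longleftrightarrow> \<bar>t\<bar> \<le> 1/4" for t :: real by arith
  then show ?thesis unfolding cube_def by simp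
qed

lemma closed_tile: "closed (tile m)"
  unfolding tile_def by (intro closed_Collect_all closed_Collect_le continuous_intros)

lemma tiles_cover: "\<exists>m. y \<in> tile m"
proof -
  define m where "m k = \<lfloor>2 * y$k + 1/2\<rfloor>" for k
  have bounds: "of_int (m k) \<le> 2 * y$k + 1/2" "2 * y$k + 1/2 < of_int (m k) + 1" for k
    unfolding m_def by linarith+
  have "\<bar>y$k - of_int (m k) / 2\<bar> \<le> 1/4" for k
    using bounds[of k] unfolding abs_le_iff by linarith
  then have "y \<in> tile m"
    unfolding tile_def by blast
  then show ?thesis by blast
qed

lemma tile_to_cube:
  fixes A :: "'n::finite \<Rightarrow> 'n \<Rightarrow> bool"
  assumes "bott_matrix A"
  shows "\<exists>n. aff A n \<in> Gamma A \<and> (\<forall>y. aff A n y \<in> cube \<longleftrightarrow> y \<in> tile m)"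
proof -
  let ?c = "(\<chi> k. of_int (m k) / 2) :: real^'n"
  obtain h where h: "h \<in> Gamma A" "h 0 = ?c"
    using Bott_reaches_half_lattice[OF assms] by blast
  obtain g where g: "g \<in> Gamma A" "g \<circ> h = id"
    using Gamma_left_inverse[OF h(1)] by blast
  obtain n where n: "g = aff A n"
    using Gamma_aff[OF bott_matrix_diag[OF assms] g(1)] by blast
  have "aff A n ?c = 0"
    using g(2) h(2) n by (metis comp_apply id_apply)
  then have "\<bar>aff A n y $ k\<bar> = \<bar>y$k - of_int (m k) / 2\<bar>" for y k
    using aff_coord_diff[of A n y k ?c] by simp
  then show ?thesis
    using g(1) n by (auto simp: cube_abs tile_def)
qed

lemma orbit_meets_cube:
  fixes A :: "'n::finite \<Rightarrow> 'n \<Rightarrow> bool"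
  assumes "bott_matrix A"
  shows "\<exists>c\<in>cube. (y, c) \<in> orbit_rel A"
proof -
  obtain m where "y \<in> tile m" using tiles_cover by blast
  moreover obtain n where "aff A n \<in> Gamma A" "\<forall>y. aff A n y \<in> cube \<longleftrightarrow> y \<in> tile m"
    using tile_to_cube[OF assms] by blast
  ultimately show ?thesis
    unfolding orbit_rel_def by blast
qed

lemma locally_finite_tiles: "locally_finite_in euclidean (range (tile :: ('n::finite \<Rightarrow> int) \<Rightarrow> _))"
  unfolding locally_finite_in_def
proof (intro conjI ballI)
  show "\<Union>(range tile) \<subseteq> topspace euclidean" by simp
  fix x :: "real^'n"
  define B where "B = \<lceil>2 * norm x\<rceil> + 3"
  have near: "m \<in> {m. \<forall>k. m k \<in> {-B..B}}" if meets: "tile m \<inter> ball x 1 \<noteq> {}" for m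
  proof -
    obtain y where y: "y \<in> tile m" "dist x y < 1" using meets by auto
    have "\<bar>m k\<bar> \<le> B" for k
    proof -
      have "\<bar>y$k - x$k\<bar> < 1"
        using dist_vec_nth_le[of x k y] y(2) by (simp add: dist_real_def)
      moreover have "\<bar>x$k\<bar> \<le> norm x" by (rule component_le_norm_cart)
      moreover have "\<bar>y$k - of_int (m k) / 2\<bar> \<le> 1/4" using y(1) by (simp add: tile_def)
      moreover have "2 * norm x \<le> of_int \<lceil>2 * norm x\<rceil>" by linarith
      ultimately have "of_int \<bar>m k\<bar> \<le> (of_int B :: real)"
        unfolding B_def abs_le_iff abs_less_iff of_int_abs of_int_add by linarith
      then show ?thesis by linarith
    qed
    then show ?thesis by (simp add: abs_le_iff minus_le_iff)
  qed
  have "finite {m :: 'n \<Rightarrow> int. \<forall>k. m k \<in> {-B..B}}"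
    using finite_PiE[of "UNIV :: 'n set" "\<lambda>_. {-B..B}"] unfolding PiE_UNIV_domain Pi_def by simp
  then have "finite (tile ` {m :: 'n \<Rightarrow> int. \<forall>k. m k \<in> {-B..B}})" by (rule finite_imageI)
  moreover have "{U \<in> range tile. U \<inter> ball x 1 \<noteq> {}} \<subseteq> tile ` {m. \<forall>k. m k \<in> {-B..B}}"
    using near by blast
  ultimately have "finite {U \<in> range tile. U \<inter> ball x 1 \<noteq> {}}"
    by (rule finite_subset[rotated])
  then show "\<exists>V. openin euclidean V \<and> x \<in> V \<and> finite {U \<in> range tile. U \<inter> V \<noteq> {}}"
    by (intro exI[of _ "ball x 1"]) auto
qed

text \<open>
  A Gamma(A)-saturated set W whose trace on the cube is
  relatively open is open: on each tile, the complement of W is the preimage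
  of a closed set under a continuous group element, and a locally finite union
  of closed sets is closed.
\<close>

lemma saturated_open:
  fixes A :: "'n::finite \<Rightarrow> 'n \<Rightarrow> bool"
  assumes bott: "bott_matrix A"
    and saturated: "\<And>x y. (x, y) \<in> orbit_rel A \<Longrightarrow> x \<in> W \<Longrightarrow> y \<in> W"
    and open_in_cube: "openin (subtopology euclidean cube) (W \<inter> cube)"
  shows "open W"
proof -
  obtain T where T: "open T" "W \<inter> cube = cube \<inter> T"
    using open_in_cube unfolding openin_open by blast
  have closed_piece: "closed (- W \<inter> tile m)" for m
  proof -
    obtain n where n: "aff A n \<in> Gamma A" "\<And>y. aff A n y \<in> cube \<longleftrightarrow> y \<in> tile m"
      using tile_to_cube[OF bott] by blast
    have invariant: "y \<in> W \<longleftrightarrow> aff A n y \<in> W" for y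
    proof -
      have "(y, aff A n y) \<in> orbit_rel A"
        unfolding orbit_rel_def using n(1) by blast
      moreover from this have "(aff A n y, y) \<in> orbit_rel A"
        using orbit_rel_equiv by (metis equiv_def symD)
      ultimately show ?thesis using saturated by blast
    qed
    have "x \<in> W \<longleftrightarrow> x \<in> T" if "x \<in> cube" for x
      using T(2) that by blast
    then have "y \<in> W \<longleftrightarrow> aff A n y \<in> T" if "y \<in> tile m" for y
      using invariant[of y] n(2)[of y] that by simp
    then have "- W \<inter> tile m = aff A n -` (- T) \<inter> tile m"
      by blast
    also have "closed \<dots>"
      using T(1) continuous_on_subset[OF continuous_aff] closed_tile
      by (intro closed_vimage_Int) auto
    finally show ?thesis .
  qed
  have "locally_finite_in euclidean ((\<lambda>S. - W \<inter> S) ` range tile)"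
    using locally_finite_in_refinement[OF locally_finite_tiles, of "\<lambda>S. - W \<inter> S"] by blast
  then have "closedin euclidean (\<Union>((\<lambda>S. - W \<inter> S) ` range tile))"
    using closed_piece by (intro closedin_locally_finite_Union) (auto simp: closed_closedin[symmetric])
  moreover have "\<Union>((\<lambda>S. - W \<inter> S) ` range tile) = - W"
  proof (intro equalityI subsetI)
    fix y assume "y \<in> - W"
    moreover obtain m where "y \<in> tile m" using tiles_cover by blast
    ultimately show "y \<in> \<Union>((\<lambda>S. - W \<inter> S) ` range tile)" by blast
  qed blast
  ultimately have "closed (- W)"
    by (metis closed_closedin)
  then show ?thesis by (simp add: open_closed)
qed

definition seal_step :: "('n \<Rightarrow> 'n \<Rightarrow> bool) \<Rightarrow> ((real^'n) \<times> (real^'n)) set" where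
  "seal_step A = {(x, tau A i x) | x i pos. x \<in> facet i pos}"

lemma seal_rel_seal_step: "seal_rel A = (seal_step A \<union> (seal_step A)\<inverse>)\<^sup>*"
  unfolding seal_rel_def seal_step_def Let_def ..

lemma seal_step_facet: "x \<in> facet i pos \<Longrightarrow> (x, tau A i x) \<in> seal_step A"
  unfolding seal_step_def by blast

text \<open>
  Gluing steps stay in the cube and are realised by generators of Gamma(A)
  (tau_i equals s_i^{-1} on F(i) and s_i on F(-i)), so seal-equivalent points
  are in the same orbit.
\<close>

lemma seal_rel_cube: "(x, y) \<in> seal_rel A \<Longrightarrow> x \<in> cube \<Longrightarrow> y \<in> cube"
  unfolding seal_rel_seal_step
proof (induction rule: rtrancl_induct)
  case (step y z)
  have "\<bar>tau A i x $ k\<bar> = \<bar>x $ k\<bar>" for i x k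
    by (simp add: tau_def abs_mult)
  with step show ?case
    by (auto simp: seal_step_def facet_def cube_abs)
qed

lemma seal_step_orbit: "(x, y) \<in> seal_step A \<Longrightarrow> (x, y) \<in> orbit_rel A"
proof -
  assume "(x, y) \<in> seal_step A"
  then obtain i pos where i: "x \<in> facet i pos" "y = tau A i x"
    unfolding seal_step_def by blast
  then have "y = shift A i (if pos then -1 else 1) x"
    by (auto simp: facet_def tau_def shift_def vec_eq_iff)
  then show ?thesis
    unfolding orbit_rel_def using shift_in_Gamma[of A i] by auto
qed

lemma seal_rel_orbit: "(x, y) \<in> seal_rel A \<Longrightarrow> (x, y) \<in> orbit_rel A"
  unfolding seal_rel_seal_step
proof (induction rule: rtrancl_induct)
  case base
  show ?case using orbit_rel_equiv by (metis UNIV_I equiv_class_self Image_singleton_iff)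
next
  case (step y z)
  then have "(y, z) \<in> orbit_rel A"
    using seal_step_orbit orbit_rel_equiv by (metis UnE converse_iff equiv_def symD)
  with step.IH show ?case
    using orbit_rel_equiv by (metis equiv_def transD)
qed

text \<open>
  Composite of the gluing maps tau_i over a set S of directions; the tau_i
  commute, acting on coordinate k by the product of their signs.
\<close>

definition tau_sign :: "('n \<Rightarrow> 'n \<Rightarrow> bool) \<Rightarrow> 'n \<Rightarrow> 'n \<Rightarrow> real" where
  "tau_sign A i k = (if k = i then -1 else sgn01 (A i k))"

definition tau_set :: "('n \<Rightarrow> 'n \<Rightarrow> bool) \<Rightarrow> 'n set \<Rightarrow> real^'n \<Rightarrow> real^'n" where
  "tau_set A S x = (\<chi> k. (\<Prod>i\<in>S. tau_sign A i k) * x$k)"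

lemma abs_tau_set: "\<bar>tau_set A S x $ k\<bar> = \<bar>x$k\<bar>"
proof -
  have "\<bar>\<Prod>i\<in>S. tau_sign A i k\<bar> = 1"
    unfolding abs_prod by (rule prod.neutral) (simp add: tau_sign_def)
  then show ?thesis by (simp add: tau_set_def abs_mult)
qed

lemma tau_set_chain:
  assumes "finite S" "x \<in> cube" "\<And>i. i \<in> S \<Longrightarrow> \<bar>x$i\<bar> = 1/4"
  shows "(x, tau_set A S x) \<in> seal_rel A"
  using assms
proof (induction S rule: finite_induct)
  case empty
  have "tau_set A {} x = x" by (simp add: tau_set_def vec_eq_iff)
  then show ?case by (simp add: seal_rel_seal_step)
next
  case (insert i S)
  let ?z = "tau_set A S x"
  have "?z \<in> cube" using insert.prems(1) by (simp add: cube_abs abs_tau_set)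
  moreover have "\<bar>?z$i\<bar> = 1/4" using insert.prems(2) abs_tau_set[of A S x i] by simp
  moreover from this have "?z$i = 1/4 \<or> ?z$i = -1/4"
    unfolding abs_eq_iff' by simp
  ultimately have on_facet: "?z \<in> facet i (?z$i = 1/4)"
    unfolding facet_def by auto
  have "tau A i ?z = tau_set A (insert i S) x"
    using insert.hyps by (simp add: tau_set_def tau_def tau_sign_def vec_eq_iff)
  with seal_step_facet[OF on_facet, of A] have "(?z, tau_set A (insert i S) x) \<in> seal_step A"
    by simp
  moreover have "(x, ?z) \<in> seal_rel A"
    using insert by simp
  ultimately show ?case
    unfolding seal_rel_seal_step by (blast intro: rtrancl_into_rtrancl)
qed

lemma half_integer_step_in_cube:
  fixes t :: real and n :: int
  assumes "\<bar>t\<bar> \<le> 1/4" "\<bar>t + of_int n / 2\<bar> \<le> 1/4"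
  shows "n = 0 \<or> (odd n \<and> t + of_int n / 2 = - t \<and> \<bar>t\<bar> = 1/4)"
proof -
  have "- 1 \<le> n" "n \<le> 1"
    using assms unfolding abs_le_iff by linarith+
  then consider "n = -1" | "n = 0" | "n = 1" by linarith
  then show ?thesis
  proof cases
    case 1
    then have "t = 1/4" using assms unfolding abs_le_iff by simp
    with 1 show ?thesis by simp
  next
    case 3
    then have "t = -1/4" using assms unfolding abs_le_iff by simp
    with 3 show ?thesis by simp
  qed simp
qed

lemma prod_tau_sign:
  assumes "finite S" "\<not> A k k"
  shows "(\<Prod>i\<in>S. tau_sign A i k) = (if k \<in> S then -1 else 1) * (\<Prod>i\<in>S. sgn01 (A i k))"
proof -
  have "(\<Prod>i\<in>S. tau_sign A i k) = (\<Prod>i\<in>S. (if i = k then -1 else 1) * sgn01 (A i k))"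
    using assms(2) by (intro prod.cong) (auto simp: tau_sign_def sgn01_def)
  also have "\<dots> = (if k \<in> S then -1 else 1) * (\<Prod>i\<in>S. sgn01 (A i k))"
    using assms(1) by (simp add: prod.distrib prod.delta')
  finally show ?thesis .
qed

text \<open>
  Conversely, two points of the cube in the same orbit are seal-equivalent: a
  group element taking the cube point x into the cube only reflects x in the
  facets it lies on, i.e. it acts as a composite of gluing maps.
\<close>

lemma orbit_in_cube_is_seal:
  fixes A :: "'n::finite \<Rightarrow> 'n \<Rightarrow> bool"
  assumes diag: "\<And>i. \<not> A i i" and x: "x \<in> cube" and y: "y \<in> cube" and xy: "(x, y) \<in> orbit_rel A"
  shows "(x, y) \<in> seal_rel A"
proof -
  obtain g where g: "g \<in> Gamma A" "y = g x" using xy unfolding orbit_rel_def by blast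
  obtain n where n: "g = aff A n" using Gamma_aff[OF diag g(1)] by blast
  define S where "S = {i. odd (n i)}"
  have coord: "y$k = flip_sign A n k * x$k + of_int (n k) / 2" for k
    using g(2) n by (simp add: aff_def)
  have coord_cases: "n k = 0 \<or> (odd (n k) \<and> y$k = - (flip_sign A n k * x$k) \<and> \<bar>x$k\<bar> = 1/4)" for k
  proof -
    have "\<bar>flip_sign A n k * x$k\<bar> = \<bar>x$k\<bar>" by (simp add: abs_mult abs_flip_sign)
    moreover have "\<bar>x$k\<bar> \<le> 1/4" "\<bar>y$k\<bar> \<le> 1/4" using x y by (simp_all add: cube_abs)
    ultimately show ?thesis
      using half_integer_step_in_cube[of "flip_sign A n k * x$k" "n k"] coord[of k] by auto
  qed
  have "y$k = (if k \<in> S then -1 else 1) * flip_sign A n k * x$k" and "k \<in> S \<Longrightarrow> \<bar>x$k\<bar> = 1/4" for k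
    using coord_cases[of k] coord[of k] by (auto simp: S_def)
  moreover have "y = tau_set A S x"
    using calculation(1) prod_tau_sign[where S = S and A = A] diag
    by (simp add: vec_eq_iff tau_set_def flip_sign_def S_def)
  ultimately show ?thesis
    using tau_set_chain[of S x A] x by simp
qed

lemma seal_class_eq:
  fixes A :: "'n::finite \<Rightarrow> 'n \<Rightarrow> bool"
  assumes "\<And>i. \<not> A i i" "x \<in> cube"
  shows "seal_rel A `` {x} = orbit_rel A `` {x} \<inter> cube"
  using assms seal_rel_orbit seal_rel_cube orbit_in_cube_is_seal by blast

theorem mainTheorem10:
  fixes A :: "'n::finite \<Rightarrow> 'n \<Rightarrow> bool"
  assumes "bott_matrix A"
  shows "seal_space A homeomorphic_space M_space A"
  unfolding seal_space_def M_space_def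
proof (rule homeomorphic_quotient_fundamental_domain)
  show "equiv (topspace euclidean) (orbit_rel A)"
    using orbit_rel_equiv by simp
  show "\<exists>c\<in>cube. (x, c) \<in> orbit_rel A" for x
    using orbit_meets_cube[OF assms] .
  show "seal_rel A `` {x} = orbit_rel A `` {x} \<inter> cube" if "x \<in> cube" for x
    using seal_class_eq[OF bott_matrix_diag[OF assms] that] .
  show "openin euclidean W"
    if "\<And>x y. (x, y) \<in> orbit_rel A \<Longrightarrow> x \<in> W \<Longrightarrow> y \<in> W"
      and "openin (subtopology euclidean cube) (W \<inter> cube)" for W
    using saturated_open[OF assms that] by simp
qed simp

end
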